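(* Let $\mathcal C\subset\mathbb C$ be a Jordan curve with interior domain $D$, $\xi(u)$ a meromorphic function with no singularities on $\mathcal C$, and $f(u,v)$ a meromorphic function with no singularities in $\overline D\times\overline D$. Then $\oint_{\mathcal C}\oint_{\mathcal C}f(u,v)\frac{\xi(u)-\xi(v)}{u-v}\,du\,dv=-\oint_{\mathcal C}f(u,u)\xi(u)\,du$.
   Context: A Jordan curve is a disjoint union of simple closed (positively oriented) curves in $\mathbb C$ whose inner domains are pairwise disjoint; its interior domain is the union of these inner domains. For a continuous function $F$ on $\mathcal C$, $\oint_{\mathcal C}F(u)\,du:=\frac1{2\pi i}\int_{\mathcal C}F(u)\,du$. *)

theory Defs
  imports "HOL-Complex_Analysis.Complex_Analysis"
begin

definition jordan_curve :: "'i set \<Rightarrow> ('i \<Rightarrow> real \<Rightarrow> complex) \<Rightarrow> bool" where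
  "jordan_curve I \<gamma> \<longleftrightarrow> finite I \<and>
     (\<forall>i\<in>I. valid_path (\<gamma> i) \<and> simple_path (\<gamma> i) \<and> pathfinish (\<gamma> i) = pathstart (\<gamma> i) \<and>
        (\<forall>z\<in>inside (path_image (\<gamma> i)). winding_number (\<gamma> i) z = 1)) \<and>
     (\<forall>i\<in>I. \<forall>j\<in>I. i \<noteq> j \<longrightarrow>
        path_image (\<gamma> i) \<inter> path_image (\<gamma> j) = {} \<and>
        inside (path_image (\<gamma> i)) \<inter> inside (path_image (\<gamma> j)) = {})"

definition jcurve_image :: "'i set \<Rightarrow> ('i \<Rightarrow> real \<Rightarrow> complex) \<Rightarrow> complex set" where
  "jcurve_image I \<gamma> = (\<Union>i\<in>I. path_image (\<gamma> i))"

definition jdomain :: "'i set \<Rightarrow> ('i \<Rightarrow> real \<Rightarrow> complex) \<Rightarrow> complex set" where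
  "jdomain I \<gamma> = (\<Union>i\<in>I. inside (path_image (\<gamma> i)))"

definition jint :: "'i set \<Rightarrow> ('i \<Rightarrow> real \<Rightarrow> complex) \<Rightarrow> (complex \<Rightarrow> complex) \<Rightarrow> complex" where
  "jint I \<gamma> F = (1 / (2 * of_real pi * \<i>)) * (\<Sum>i\<in>I. contour_integral (\<gamma> i) F)"

text \<open>Difference quotient (xi(u) - xi(v))/(u - v), extended continuously to the diagonal.\<close>
definition dquot :: "(complex \<Rightarrow> complex) \<Rightarrow> complex \<Rightarrow> complex \<Rightarrow> complex" where
  "dquot \<xi> u v = (if u = v then deriv \<xi> u else (\<xi> u - \<xi> v) / (u - v))"

end

theory Submission
  imports Defs
begin

text \<open>For fixed \<open>v\<close> on the curve, \<open>u \<mapsto> f u v (\<xi> u - \<xi> v) / (u - v)\<close> is holomorphic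
  near the closed domain except at the finitely many poles \<open>q\<close> of \<open>\<xi>\<close>, so the inner
  integral can be taken over small circles around the poles instead; on such a circle the
  term \<open>\<xi> v f u v / (u - v)\<close> integrates to zero, because \<open>v\<close> lies outside the disc.
  The circles avoid the curve, so the remaining kernel \<open>f u v \<xi> u / (u - v)\<close> is continuous
  and the two integrations may be exchanged. The new inner integral over \<open>v\<close> is a Cauchy
  integral at a point \<open>u\<close> of the domain, where the winding numbers of the components add up
  to one; it yields \<open>- f u u \<xi> u\<close>. Contracting the curve to the same circles for
  \<open>f u u \<xi> u\<close> identifies the result with the right-hand side.\<close>

lemma continuous_on_contour_integral_param:
  assumes c: "path c" and dc: "continuous_on {0..1} (\<lambda>t. vector_derivative c (at t))"
    and G: "continuous_on (A \<times> path_image c) (\<lambda>(a, u). G a u)"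
  shows "continuous_on A (\<lambda>a. contour_integral c (G a))"
proof -
  have cc: "continuous_on {0..1} c" using c by (simp add: path_def)
  have "continuous_on (A \<times> {0..1}) (\<lambda>x. (fst x, c (snd x)))"
    by (intro continuous_intros continuous_on_compose2[OF cc]) auto
  moreover have "(\<lambda>x. (fst x, c (snd x))) ` (A \<times> {0..1}) \<subseteq> A \<times> path_image c"
    by (auto simp: path_image_def)
  ultimately have "continuous_on (A \<times> {0..1}) (\<lambda>x. G (fst x) (c (snd x)))"
    using continuous_on_compose2[OF G, of "A \<times> {0..1}" "\<lambda>x. (fst x, c (snd x))"]
    by (simp add: split_beta)
  moreover have "continuous_on (A \<times> {0..1}) (\<lambda>x. vector_derivative c (at (snd x)))"
    by (intro continuous_on_compose2[OF dc] continuous_intros) auto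
  ultimately have "continuous_on (A \<times> cbox 0 1) (\<lambda>(a, t). G a (c t) * vector_derivative c (at t))"
    by (simp add: split_beta continuous_on_mult)
  then have "continuous_on A (\<lambda>a. integral (cbox 0 1) (\<lambda>t. G a (c t) * vector_derivative c (at t)))"
    by (rule integral_continuous_on_param)
  then show ?thesis by (simp add: contour_integral_integral)
qed

lemma contour_integrable_continuous_C1:
  assumes c: "path c" and dc: "continuous_on {0..1} (\<lambda>t. vector_derivative c (at t))"
    and h: "continuous_on (path_image c) h"
  shows "h contour_integrable_on c"
proof -
  have "continuous_on {0..1} (\<lambda>t. h (c t))"
    using c by (intro continuous_on_compose2[OF h]) (auto simp: path_def path_image_def)
  then have "continuous_on {0..1} (\<lambda>t. h (c t) * vector_derivative c (at t))"
    using dc by (intro continuous_intros)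
  then show ?thesis
    unfolding contour_integrable_on by (intro integrable_continuous_real)
qed

lemma continuous_on_vector_derivative_circlepath:
  "continuous_on {0..1} (\<lambda>t. vector_derivative (circlepath z r) (at t))"
  unfolding vector_derivative_circlepath by (intro continuous_intros)

text \<open>Morera's theorem: Fubini over the edges of a triangle reduces the triangle integral
  of the parametric integral to the triangle integrals of the holomorphic integrands.\<close>
lemma holomorphic_on_contour_integral_param:
  assumes c: "valid_path c" and dc: "continuous_on {0..1} (\<lambda>t. vector_derivative c (at t))"
    and V: "open V"
    and F: "continuous_on (path_image c \<times> V) (\<lambda>(u, v). F u v)"
    and hol: "\<And>u. u \<in> path_image c \<Longrightarrow> (\<lambda>v. F u v) holomorphic_on V"
  shows "(\<lambda>v. contour_integral c (\<lambda>u. F u v)) holomorphic_on V"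
proof -
  have pc: "path c" using c valid_path_imp_path by blast
  have Fs: "continuous_on (V \<times> path_image c) (\<lambda>(v, u). F u v)"
    using continuous_on_swap_args[OF F] by (simp add: split_beta)
  have cont: "continuous_on V (\<lambda>v. contour_integral c (\<lambda>u. F u v))"
    by (rule continuous_on_contour_integral_param[OF pc dc Fs])
  have seg: "contour_integral (linepath x y) (\<lambda>v. contour_integral c (\<lambda>u. F u v))
        = contour_integral c (\<lambda>u. contour_integral (linepath x y) (F u))"
    and segi: "(\<lambda>u. contour_integral (linepath x y) (F u)) contour_integrable_on c"
    if xy: "closed_segment x y \<subseteq> V" for x y
  proof -
    have dl: "continuous_on {0..1} (\<lambda>t. vector_derivative (linepath x y) (at t))"
      by simp
    have "continuous_on (path_image (linepath x y) \<times> path_image c) (\<lambda>(w, z). F z w)"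
      by (rule continuous_on_subset[OF Fs]) (use xy in \<open>simp add: Sigma_mono\<close>)
    from contour_integral_swap[OF this valid_path_linepath c dl dc]
    show "contour_integral (linepath x y) (\<lambda>v. contour_integral c (\<lambda>u. F u v))
        = contour_integral c (\<lambda>u. contour_integral (linepath x y) (F u))"
      by simp
    have "continuous_on (path_image c \<times> path_image (linepath x y)) (\<lambda>(u, w). F u w)"
      by (rule continuous_on_subset[OF F]) (use xy in \<open>simp add: Sigma_mono\<close>)
    then have "continuous_on (path_image c) (\<lambda>u. contour_integral (linepath x y) (F u))"
      by (rule continuous_on_contour_integral_param[OF path_linepath dl])
    then show "(\<lambda>u. contour_integral (linepath x y) (F u)) contour_integrable_on c"
      by (rule contour_integrable_continuous_C1[OF pc dc])
  qed
  have "(\<lambda>v. contour_integral c (\<lambda>u. F u v)) analytic_on V"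
  proof (rule Morera_triangle[OF cont V], intro impI)
    fix a b d assume hull: "convex hull {a, b, d} \<subseteq> V"
    have s: "closed_segment a b \<subseteq> V" "closed_segment b d \<subseteq> V" "closed_segment d a \<subseteq> V"
      using segments_subset_convex_hull hull by (meson order_trans)+
    have zero: "contour_integral (linepath a b) (F u) + contour_integral (linepath b d) (F u)
           + contour_integral (linepath d a) (F u) = 0" if "u \<in> path_image c" for u
      using has_chain_integral_chain_integral3[OF Cauchy_theorem_triangle[OF
          holomorphic_on_subset[OF hol[OF that] hull]]] .
    show "contour_integral (linepath a b) (\<lambda>v. contour_integral c (\<lambda>u. F u v)) +
          contour_integral (linepath b d) (\<lambda>v. contour_integral c (\<lambda>u. F u v)) +
          contour_integral (linepath d a) (\<lambda>v. contour_integral c (\<lambda>u. F u v)) = 0"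
      using seg[OF s(1)] seg[OF s(2)] seg[OF s(3)] segi[OF s(1)] segi[OF s(2)] segi[OF s(3)]
      by (simp add: contour_integral_add[symmetric] contour_integrable_add zero contour_integral_eq_0)
  qed
  then show ?thesis by (rule analytic_imp_holomorphic)
qed

text \<open>Near each point the diagonal is a parametric Cauchy integral over a small circle,
  hence holomorphic by the previous lemma.\<close>
lemma holomorphic_on_diagonal:
  assumes U: "open U" and fc: "continuous_on (U \<times> U) (\<lambda>(u, v). f u v)"
    and f1: "\<forall>v\<in>U. (\<lambda>u. f u v) holomorphic_on U"
    and f2: "\<forall>u\<in>U. f u holomorphic_on U"
  shows "(\<lambda>u. f u u) holomorphic_on U"
  unfolding holomorphic_on_open[OF U]
proof
  fix z0 assume z0: "z0 \<in> U"
  obtain \<rho> where \<rho>: "\<rho> > 0" "cball z0 \<rho> \<subseteq> U" using open_contains_cball U z0 by blast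
  define \<Psi> where "\<Psi> u = contour_integral (circlepath z0 \<rho>) (\<lambda>w. f w u / (w - u))" for u
  have sph: "sphere z0 \<rho> \<subseteq> U" "ball z0 \<rho> \<subseteq> U" using \<rho> by auto
  have pim: "path_image (circlepath z0 \<rho>) = sphere z0 \<rho>"
    using \<rho> by (simp add: path_image_circlepath_nonneg)
  have Fc: "continuous_on (path_image (circlepath z0 \<rho>) \<times> ball z0 \<rho>) (\<lambda>(w, u). f w u / (w - u))"
  proof -
    have "continuous_on (sphere z0 \<rho> \<times> ball z0 \<rho>) (\<lambda>x. f (fst x) (snd x))"
      using continuous_on_subset[OF fc] sph by (simp add: split_beta Sigma_mono)
    then have "continuous_on (sphere z0 \<rho> \<times> ball z0 \<rho>) (\<lambda>x. f (fst x) (snd x) / (fst x - snd x))"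
      by (intro continuous_intros) auto
    then show ?thesis using pim by (simp add: split_beta)
  qed
  have Fh: "(\<lambda>u. f w u / (w - u)) holomorphic_on ball z0 \<rho>"
    if "w \<in> path_image (circlepath z0 \<rho>)" for w
  proof -
    have "w \<in> U" "w \<notin> ball z0 \<rho>" using that pim sph by auto
    then show ?thesis
      by (intro holomorphic_intros holomorphic_on_subset[OF bspec[OF f2]] sph(2)) auto
  qed
  have hol: "\<Psi> holomorphic_on ball z0 \<rho>"
    unfolding \<Psi>_def
    by (rule holomorphic_on_contour_integral_param[OF valid_path_circlepath
          continuous_on_vector_derivative_circlepath open_ball Fc Fh])
  have eq: "f u u = \<Psi> u / (2 * of_real pi * \<i>)" if "u \<in> ball z0 \<rho>" for u
  proof -
    have "((\<lambda>w. f w u / (w - u)) has_contour_integral (2 * of_real pi * \<i> * f u u)) (circlepath z0 \<rho>)"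
    proof (rule Cauchy_integral_circlepath)
      have "(\<lambda>w. f w u) holomorphic_on U" using f1 that sph by auto
      then show "continuous_on (cball z0 \<rho>) (\<lambda>w. f w u)" "(\<lambda>w. f w u) holomorphic_on ball z0 \<rho>"
        using \<rho> sph by (auto intro: holomorphic_on_imp_continuous_on holomorphic_on_subset)
      show "cmod (u - z0) < \<rho>" using that by (simp add: dist_norm norm_minus_commute)
    qed
    then show ?thesis unfolding \<Psi>_def using contour_integral_unique by fastforce
  qed
  have "(\<lambda>u. f u u) holomorphic_on ball z0 \<rho>"
  proof (rule holomorphic_transform)
    show "(\<lambda>u. \<Psi> u / (2 * of_real pi * \<i>)) holomorphic_on ball z0 \<rho>"
      using hol by (intro holomorphic_intros) simp_all
  qed (simp add: eq)
  then show "\<exists>f'. ((\<lambda>u. f u u) has_field_derivative f') (at z0)"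
    using \<rho> holomorphic_on_imp_differentiable_at[of _ "ball z0 \<rho>"]
    by (auto simp: field_differentiable_def)
qed

lemma valid_path_C1_replacement:
  assumes S: "open S" and g: "valid_path g" and pg: "path_image g \<subseteq> S"
  obtains p where "valid_path p" "continuous_on {0..1} (\<lambda>t. vector_derivative p (at t))"
    "path_image p \<subseteq> S" "\<And>f. f holomorphic_on S \<Longrightarrow> contour_integral g f = contour_integral p f"
proof -
  have "path g" using g by (simp add: valid_path_imp_path)
  obtain d where d: "0 < d" and
    near: "\<And>g' h. valid_path g' \<Longrightarrow> valid_path h \<Longrightarrow> (\<forall>t \<in> {0..1}. norm(g' t - g t) < d \<and> norm(h t - g t) < d)
          \<Longrightarrow> pathstart h = pathstart g' \<and> pathfinish h = pathfinish g'
          \<Longrightarrow> path_image g' \<subseteq> S \<and> path_image h \<subseteq> S \<and>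
              (\<forall>f. f holomorphic_on S \<longrightarrow> contour_integral h f = contour_integral g' f)"
    using contour_integral_nearby_ends [OF S \<open>path g\<close> pg] by metis
  obtain p where p: "polynomial_function p" "pathstart p = pathstart g" "pathfinish p = pathfinish g"
    "\<And>t. t \<in> {0..1} \<Longrightarrow> norm(p t - g t) < d"
    using path_approx_polynomial_function[OF \<open>path g\<close> d] by metis
  have vp: "valid_path p" using p(1) by (rule valid_path_polynomial_function)
  obtain p' where p': "polynomial_function p'" "\<And>x. (p has_vector_derivative (p' x)) (at x)"
    using has_vector_derivative_polynomial_function[OF p(1)] by metis
  have "continuous_on {0..1} (\<lambda>t. vector_derivative p (at t))"
    using continuous_on_polymonial_function[OF p'(1)] p'(2) vector_derivative_at
    by (metis (no_types, lifting) continuous_on_cong)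
  then show ?thesis using that vp near[OF g vp] p d by auto
qed

text \<open>Fubini for a valid path against a \<open>C\<^sup>1\<close> path: the valid path is first replaced by
  a \<open>C\<^sup>1\<close> path, which leaves integrals of functions holomorphic on \<open>S\<close> unchanged.\<close>
lemma contour_integral_swap_holomorphic:
  assumes S: "open S" and g: "valid_path g" "path_image g \<subseteq> S"
    and h: "valid_path h" "continuous_on {0..1} (\<lambda>t. vector_derivative h (at t))"
    and F: "continuous_on (S \<times> path_image h) (\<lambda>(v, u). F v u)"
    and hol: "\<And>u. u \<in> path_image h \<Longrightarrow> (\<lambda>v. F v u) holomorphic_on S"
  shows "contour_integral g (\<lambda>v. contour_integral h (F v))
           = contour_integral h (\<lambda>u. contour_integral g (\<lambda>v. F v u))"
    and "(\<lambda>v. contour_integral h (F v)) contour_integrable_on g"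
    and "(\<lambda>u. contour_integral g (\<lambda>v. F v u)) contour_integrable_on h"
proof -
  obtain p where p: "valid_path p" "continuous_on {0..1} (\<lambda>t. vector_derivative p (at t))"
      "path_image p \<subseteq> S"
    and same: "\<And>k. k holomorphic_on S \<Longrightarrow> contour_integral g k = contour_integral p k"
    using valid_path_C1_replacement[OF S g] by metis
  have Fs: "continuous_on (path_image h \<times> S) (\<lambda>(u, v). F v u)"
    using continuous_on_swap_args[OF F] by (simp add: split_beta)
  have hol\<Phi>: "(\<lambda>v. contour_integral h (F v)) holomorphic_on S"
    using holomorphic_on_contour_integral_param[OF h S Fs hol] by simp
  then show "(\<lambda>v. contour_integral h (F v)) contour_integrable_on g"
    using contour_integrable_holomorphic_simple[OF _ S g] by blast
  have eq: "contour_integral g (\<lambda>v. F v u) = contour_integral p (\<lambda>v. F v u)"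
    if "u \<in> path_image h" for u
    using same[OF hol[OF that]] .
  have Fp: "continuous_on (path_image p \<times> path_image h) (\<lambda>(v, u). F v u)"
    by (rule continuous_on_subset[OF F]) (use p(3) in auto)
  have "contour_integral g (\<lambda>v. contour_integral h (F v))
      = contour_integral p (\<lambda>v. contour_integral h (F v))"
    by (rule same[OF hol\<Phi>])
  also have "\<dots> = contour_integral h (\<lambda>u. contour_integral p (\<lambda>v. F v u))"
    by (rule contour_integral_swap[OF Fp p(1) h(1) p(2) h(2)])
  also have "\<dots> = contour_integral h (\<lambda>u. contour_integral g (\<lambda>v. F v u))"
    by (rule contour_integral_eq) (simp add: eq)
  finally show "contour_integral g (\<lambda>v. contour_integral h (F v))
           = contour_integral h (\<lambda>u. contour_integral g (\<lambda>v. F v u))" .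
  have "continuous_on (path_image h \<times> path_image p) (\<lambda>(u, v). F v u)"
    by (rule continuous_on_subset[OF Fs]) (use p(3) in auto)
  then have "continuous_on (path_image h) (\<lambda>u. contour_integral p (\<lambda>v. F v u))"
    by (rule continuous_on_contour_integral_param[OF valid_path_imp_path[OF p(1)] p(2)])
  then have "(\<lambda>u. contour_integral p (\<lambda>v. F v u)) contour_integrable_on h"
    by (rule contour_integrable_continuous_C1[OF valid_path_imp_path[OF h(1)] h(2)])
  then show "(\<lambda>u. contour_integral g (\<lambda>v. F v u)) contour_integrable_on h"
    by (rule contour_integrable_eq) (simp add: eq)
qed

lemma meromorphic_on_compact_finite_singularities:
  assumes mero: "f meromorphic_on K" and K: "compact K"
  defines "P \<equiv> {z \<in> K. \<not> f analytic_on {z}}"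
  obtains W where "open W" "K \<subseteq> W" "finite P" "f holomorphic_on W - P"
proof -
  obtain B where B: "open B" "K \<subseteq> B" "f meromorphic_on B"
    using meromorphic_on_open_nhd[OF mero] by blast
  define Sing where "Sing = {w. \<not> f analytic_on {w}}"
  have sparse: "Sing sparse_in B"
    unfolding Sing_def by (rule meromorphic_on_imp_sparse_singularities[OF B(3)])
  have "finite (K \<inter> Sing)"
    by (rule sparse_in_compact_finite[OF sparse_in_subset[OF sparse B(2)] K])
  moreover have "open (B - (Sing - K))"
    by (rule open_diff_sparse_pts[OF B(1) sparse_in_subset2[OF sparse]]) auto
  moreover have "f analytic_on (B - (Sing - K)) - P"
    by (subst analytic_on_analytic_at) (auto simp: Sing_def P_def)
  ultimately show ?thesis
    using that[of "B - (Sing - K)"] B(2) analytic_imp_holomorphic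
    by (auto simp: P_def Sing_def Int_def)
qed

text \<open>Off the circle's disc the part \<open>\<xi> v / (u - v)\<close> of the difference quotient is
  holomorphic in \<open>u\<close>, so only \<open>\<xi> u / (u - v)\<close> contributes.\<close>
lemma contour_integral_circlepath_dquot:
  assumes r: "0 < r" and g: "g holomorphic_on cball q r" and v: "v \<notin> cball q r"
    and \<xi>: "continuous_on (sphere q r) \<xi>"
  shows "contour_integral (circlepath q r) (\<lambda>u. g u * dquot \<xi> u v)
       = contour_integral (circlepath q r) (\<lambda>u. g u * \<xi> u / (u - v))"
proof -
  have pim: "path_image (circlepath q r) = sphere q r"
    using r by (simp add: path_image_circlepath_nonneg)
  have uv: "u \<noteq> v" if "u \<in> sphere q r" for u
    using that v by auto
  have gc: "continuous_on (sphere q r) g"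
    using holomorphic_on_imp_continuous_on[OF g] continuous_on_subset sphere_cball by blast
  have int1: "(\<lambda>u. g u * \<xi> u / (u - v)) contour_integrable_on circlepath q r"
    using gc \<xi> uv r by (intro contour_integrable_continuous_circlepath)
      (auto simp: abs_of_pos intro!: continuous_intros)
  have int2: "(\<lambda>u. \<xi> v * (g u / (u - v))) contour_integrable_on circlepath q r"
    using gc uv r by (intro contour_integrable_continuous_circlepath)
      (auto simp: abs_of_pos intro!: continuous_intros)
  have "((\<lambda>u. g u / (u - v)) has_contour_integral 0) (circlepath q r)"
    using g v r pim
    by (intro Cauchy_theorem_convex_simple[of _ "cball q r"] holomorphic_intros) auto
  then have zero: "contour_integral (circlepath q r) (\<lambda>u. \<xi> v * (g u / (u - v))) = 0"
    using contour_integral_unique has_contour_integral_lmul by fastforce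
  have "contour_integral (circlepath q r) (\<lambda>u. g u * dquot \<xi> u v)
      = contour_integral (circlepath q r) (\<lambda>u. g u * \<xi> u / (u - v) - \<xi> v * (g u / (u - v)))"
  proof (rule contour_integral_eq)
    fix u assume "u \<in> path_image (circlepath q r)"
    then have "u \<noteq> v" unfolding pim by (rule uv)
    then show "g u * dquot \<xi> u v = g u * \<xi> u / (u - v) - \<xi> v * (g u / (u - v))"
      by (simp add: dquot_def diff_divide_distrib algebra_simps)
  qed
  also have "\<dots> = contour_integral (circlepath q r) (\<lambda>u. g u * \<xi> u / (u - v))"
    unfolding contour_integral_diff[OF int1 int2] zero by simp
  finally show ?thesis .
qed

lemma jordan_curveD:
  assumes "jordan_curve I \<gamma>" "i \<in> I"
  shows "valid_path (\<gamma> i)" "simple_path (\<gamma> i)" "pathfinish (\<gamma> i) = pathstart (\<gamma> i)"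
    "\<And>z. z \<in> inside (path_image (\<gamma> i)) \<Longrightarrow> winding_number (\<gamma> i) z = 1"
  using assms unfolding jordan_curve_def by blast+

lemma jordan_curve_closure_inside:
  assumes "jordan_curve I \<gamma>" "i \<in> I"
  shows "closure (inside (path_image (\<gamma> i))) = inside (path_image (\<gamma> i)) \<union> path_image (\<gamma> i)"
  using Jordan_inside_outside[OF jordan_curveD(2,3)[OF assms]] closure_Un_frontier by metis

lemma jordan_curve_winding_number_zero:
  assumes "jordan_curve I \<gamma>" "i \<in> I" "z \<notin> inside (path_image (\<gamma> i)) \<union> path_image (\<gamma> i)"
  shows "winding_number (\<gamma> i) z = 0"
proof (rule winding_number_zero_in_outside)
  show "path (\<gamma> i)" "pathfinish (\<gamma> i) = pathstart (\<gamma> i)"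
    using jordan_curveD(1,3)[OF assms(1,2)] valid_path_imp_path by auto
  show "z \<in> outside (path_image (\<gamma> i))"
    using assms(3) by (simp add: outside_inside)
qed

lemma closure_jdomain:
  assumes J: "jordan_curve I \<gamma>"
  shows "closure (jdomain I \<gamma>) = jdomain I \<gamma> \<union> jcurve_image I \<gamma>"
proof -
  have cl: "(\<Union>i\<in>I. closure (inside (path_image (\<gamma> i)))) = jdomain I \<gamma> \<union> jcurve_image I \<gamma>"
    using jordan_curve_closure_inside[OF J] by (auto simp: jdomain_def jcurve_image_def)
  have "closed (\<Union>i\<in>I. closure (inside (path_image (\<gamma> i))))"
    using J by (intro closed_UN) (auto simp: jordan_curve_def)
  then have "closure (jdomain I \<gamma>) \<subseteq> jdomain I \<gamma> \<union> jcurve_image I \<gamma>"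
    unfolding cl[symmetric] by (intro closure_minimal) (auto simp: jdomain_def intro: closure_subset[THEN subsetD])
  moreover have "closure (inside (path_image (\<gamma> i))) \<subseteq> closure (jdomain I \<gamma>)" if "i \<in> I" for i
    using that by (intro closure_mono) (auto simp: jdomain_def)
  then have "jdomain I \<gamma> \<union> jcurve_image I \<gamma> \<subseteq> closure (jdomain I \<gamma>)"
    unfolding cl[symmetric] by blast
  ultimately show ?thesis by blast
qed

lemma compact_closure_jdomain:
  assumes "jordan_curve I \<gamma>"
  shows "compact (closure (jdomain I \<gamma>))"
  using assms Jordan_inside_outside[OF jordan_curveD(2,3)[OF assms]]
  by (auto simp: compact_closure jdomain_def jordan_curve_def)

lemma compact_jcurve_image:
  assumes "jordan_curve I \<gamma>"
  shows "compact (jcurve_image I \<gamma>)"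
  using assms compact_valid_path_image by (auto simp: jcurve_image_def jordan_curve_def)

lemma open_jdomain:
  assumes "jordan_curve I \<gamma>"
  shows "open (jdomain I \<gamma>)"
  using assms Jordan_inside_outside[OF jordan_curveD(2,3)[OF assms]]
  by (auto simp: jdomain_def)

lemma jordan_curve_sum_winding_number:
  assumes J: "jordan_curve I \<gamma>" and z: "z \<in> jdomain I \<gamma> - jcurve_image I \<gamma>"
  shows "(\<Sum>i\<in>I. winding_number (\<gamma> i) z) = 1"
proof -
  obtain j where j: "j \<in> I" "z \<in> inside (path_image (\<gamma> j))"
    using z by (auto simp: jdomain_def)
  have "winding_number (\<gamma> i) z = 0" if i: "i \<in> I - {j}" for i
  proof (rule jordan_curve_winding_number_zero[OF J])
    have "inside (path_image (\<gamma> i)) \<inter> inside (path_image (\<gamma> j)) = {}"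
      using J i j unfolding jordan_curve_def by blast
    then show "z \<notin> inside (path_image (\<gamma> i)) \<union> path_image (\<gamma> i)"
      using i j z by (auto simp: jcurve_image_def)
  qed (use i in auto)
  then have "(\<Sum>i\<in>I. winding_number (\<gamma> i) z) = winding_number (\<gamma> j) z"
    using J j by (simp add: sum.remove[of I j] sum.neutral jordan_curve_def)
  also have "\<dots> = 1" using jordan_curveD(4)[OF J j(1) j(2)] .
  finally show ?thesis .
qed

lemma jint_cong:
  assumes "\<And>u. u \<in> jcurve_image I \<gamma> \<Longrightarrow> F u = G u"
  shows "jint I \<gamma> F = jint I \<gamma> G"
  using assms unfolding jint_def jcurve_image_def by (auto intro!: sum.cong contour_integral_eq)

lemma jint_uminus: "jint I \<gamma> (\<lambda>u. - F u) = - jint I \<gamma> F"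
  by (simp add: jint_def contour_integral_neg sum_negf)

lemma jint_Cauchy_integral_formula:
  assumes J: "jordan_curve I \<gamma>" and U: "open U" "closure (jdomain I \<gamma>) \<subseteq> U"
    and g: "g holomorphic_on U" and z: "z \<in> jdomain I \<gamma> - jcurve_image I \<gamma>"
  shows "jint I \<gamma> (\<lambda>v. g v / (v - z)) = g z"
proof -
  have zU: "z \<in> U" using z U closure_subset by blast
  have "contour_integral (\<gamma> i) (\<lambda>v. g v / (v - z)) = 2 * pi * \<i> * winding_number (\<gamma> i) z * g z"
    if i: "i \<in> I" for i
  proof (rule contour_integral_unique, rule Cauchy_integral_formula_global[OF U(1) g zU])
    show "path_image (\<gamma> i) \<subseteq> U - {z}"
      using i z U closure_jdomain[OF J] by (auto simp: jcurve_image_def)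
    show "winding_number (\<gamma> i) w = 0" if "w \<notin> U" for w
      using that i U closure_jdomain[OF J]
      by (intro jordan_curve_winding_number_zero[OF J]) (auto simp: jdomain_def jcurve_image_def)
  qed (use i J in \<open>auto dest: jordan_curveD\<close>)
  then have "(\<Sum>i\<in>I. contour_integral (\<gamma> i) (\<lambda>v. g v / (v - z)))
      = 2 * pi * \<i> * g z * (\<Sum>i\<in>I. winding_number (\<gamma> i) z)"
    by (simp add: sum_distrib_left mult_ac)
  then show ?thesis
    by (simp add: jint_def jordan_curve_sum_winding_number[OF J z])
qed

lemma cball_avoid_radii:
  fixes S :: "'a::euclidean_space set"
  assumes S: "open S" and P: "finite P"
    and r: "\<And>q. q \<in> P \<Longrightarrow> q \<in> S \<Longrightarrow> 0 < r q \<and> cball q (r q) \<subseteq> S - (P - {q})"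
  obtains h where "\<forall>p\<in>S. 0 < h p \<and> (\<forall>w\<in>cball p (h p). w \<in> S \<and> (w \<noteq> p \<longrightarrow> w \<notin> P))"
    and "\<And>q. q \<in> P \<Longrightarrow> h q = r q"
proof -
  have "\<forall>p\<in>S. \<exists>e>0. \<forall>w\<in>cball p e. w \<in> S \<and> (w \<noteq> p \<longrightarrow> w \<notin> P)"
    using finite_cball_avoid[OF S P] by blast
  then obtain h0 where h0: "\<forall>p\<in>S. 0 < h0 p \<and> (\<forall>w\<in>cball p (h0 p). w \<in> S \<and> (w \<noteq> p \<longrightarrow> w \<notin> P))"
    by (rule bchoice[THEN exE])
  show ?thesis
  proof (rule that[of "\<lambda>p. if p \<in> P then r p else h0 p"])
    show "\<forall>p\<in>S. 0 < (if p \<in> P then r p else h0 p) \<and>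
        (\<forall>w\<in>cball p (if p \<in> P then r p else h0 p). w \<in> S \<and> (w \<noteq> p \<longrightarrow> w \<notin> P))"
      using h0 r by auto
  qed simp
qed

text \<open>Cauchy's theorem with finitely many exceptional points, applied to the connected
  component of \<open>U\<close> containing the curve.\<close>
lemma jordan_curve_contour_integral_circlepaths:
  assumes J: "jordan_curve I \<gamma>" and i: "i \<in> I"
    and U: "open U" "closure (jdomain I \<gamma>) \<subseteq> U"
    and P: "finite P" "P \<inter> path_image (\<gamma> i) = {}"
    and r: "\<And>q. q \<in> P \<Longrightarrow> 0 < r q \<and> cball q (r q) \<subseteq> U - (P - {q})"
    and k: "k holomorphic_on U - P"
  shows "contour_integral (\<gamma> i) k
      = (\<Sum>q\<in>P. winding_number (\<gamma> i) q * contour_integral (circlepath q (r q)) k)"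
proof -
  define S where "S = connected_component_set U (pathstart (\<gamma> i))"
  have S: "open S" "connected S" "S \<subseteq> U"
    using U(1) by (auto simp: S_def open_connected_component connected_component_subset)
  have "closure (inside (path_image (\<gamma> i))) \<subseteq> S" unfolding S_def
  proof (rule connected_component_maximal)
    show "pathstart (\<gamma> i) \<in> closure (inside (path_image (\<gamma> i)))"
      using jordan_curve_closure_inside[OF J i] pathstart_in_path_image by blast
    show "connected (closure (inside (path_image (\<gamma> i))))"
      using Jordan_inside_outside[OF jordan_curveD(2,3)[OF J i]] connected_imp_connected_closure by blast
    show "closure (inside (path_image (\<gamma> i))) \<subseteq> U"
      using U(2) i closure_mono[of "inside (path_image (\<gamma> i))" "jdomain I \<gamma>"]
      by (auto simp: jdomain_def)
  qed
  then have inS: "inside (path_image (\<gamma> i)) \<union> path_image (\<gamma> i) \<subseteq> S"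
    using jordan_curve_closure_inside[OF J i] by simp
  have "0 < r q \<and> cball q (r q) \<subseteq> S - (P - {q})" if q: "q \<in> P" "q \<in> S" for q
  proof -
    have "cball q (r q) \<subseteq> connected_component_set U q"
      using r[OF q(1)] by (intro connected_component_maximal) auto
    also have "\<dots> = S" using q(2) unfolding S_def by (rule connected_component_eq)
    finally show ?thesis using r[OF q(1)] by blast
  qed
  then obtain h where avoid: "\<forall>p\<in>S. 0 < h p \<and> (\<forall>w\<in>cball p (h p). w \<in> S \<and> (w \<noteq> p \<longrightarrow> w \<notin> P))"
    and hP: "\<And>q. q \<in> P \<Longrightarrow> h q = r q"
    using cball_avoid_radii[OF S(1) P(1)] by metis
  have "contour_integral (\<gamma> i) k
      = (\<Sum>q\<in>P. winding_number (\<gamma> i) q * contour_integral (circlepath q (h q)) k)"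
  proof (rule Cauchy_theorem_singularities[OF S(1,2) P(1) _ jordan_curveD(1,3)[OF J i] _ _ avoid])
    show "k holomorphic_on S - P" using k S(3) holomorphic_on_subset by blast
    show "path_image (\<gamma> i) \<subseteq> S - P" using inS P(2) by blast
    show "\<forall>z. z \<notin> S \<longrightarrow> winding_number (\<gamma> i) z = 0"
      using inS jordan_curve_winding_number_zero[OF J i] by blast
  qed
  then show ?thesis by (simp add: hP)
qed

text \<open>The winding numbers of the components around a pole add up to one.\<close>
lemma jint_shrink_to_circlepaths:
  assumes J: "jordan_curve I \<gamma>" and U: "open U" "closure (jdomain I \<gamma>) \<subseteq> U"
    and P: "finite P" "P \<subseteq> jdomain I \<gamma> - jcurve_image I \<gamma>"
    and r: "\<And>q. q \<in> P \<Longrightarrow> 0 < r q \<and> cball q (r q) \<subseteq> U - (P - {q})"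
    and k: "k holomorphic_on U - P"
  shows "jint I \<gamma> k = jint P (\<lambda>q. circlepath q (r q)) k"
proof -
  have "P \<inter> path_image (\<gamma> i) = {}" if "i \<in> I" for i
    using P(2) that by (auto simp: jcurve_image_def)
  then have "(\<Sum>i\<in>I. contour_integral (\<gamma> i) k)
      = (\<Sum>q\<in>P. (\<Sum>i\<in>I. winding_number (\<gamma> i) q) * contour_integral (circlepath q (r q)) k)"
    by (simp add: jordan_curve_contour_integral_circlepaths[OF J _ U P(1) _ r k]
        sum.swap[of _ I] sum_distrib_right)
  also have "\<dots> = (\<Sum>q\<in>P. contour_integral (circlepath q (r q)) k)"
    using P(2) by (intro sum.cong) (auto simp: jordan_curve_sum_winding_number[OF J])
  finally show ?thesis by (simp add: jint_def)
qed

lemma jint_swap_holomorphic: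
  assumes I: "finite I" and P: "finite P" and S: "open S"
    and \<gamma>: "\<And>i. i \<in> I \<Longrightarrow> valid_path (\<gamma> i) \<and> path_image (\<gamma> i) \<subseteq> S"
    and c: "\<And>q. q \<in> P \<Longrightarrow> valid_path (c q) \<and> continuous_on {0..1} (\<lambda>t. vector_derivative (c q) (at t))"
    and F: "continuous_on (S \<times> jcurve_image P c) (\<lambda>(v, u). F v u)"
    and hol: "\<And>u. u \<in> jcurve_image P c \<Longrightarrow> (\<lambda>v. F v u) holomorphic_on S"
  shows "jint I \<gamma> (\<lambda>v. jint P c (F v)) = jint P c (\<lambda>u. jint I \<gamma> (\<lambda>v. F v u))"
proof -
  define \<tau> :: complex where "\<tau> = 2 * of_real pi * \<i>"
  have swap: "contour_integral (\<gamma> i) (\<lambda>v. contour_integral (c q) (F v))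
        = contour_integral (c q) (\<lambda>u. contour_integral (\<gamma> i) (\<lambda>v. F v u))"
    and int1: "(\<lambda>v. contour_integral (c q) (F v)) contour_integrable_on \<gamma> i"
    and int2: "(\<lambda>u. contour_integral (\<gamma> i) (\<lambda>v. F v u)) contour_integrable_on c q"
    if i: "i \<in> I" and q: "q \<in> P" for i q
  proof -
    have "continuous_on (S \<times> path_image (c q)) (\<lambda>(v, u). F v u)"
      by (rule continuous_on_subset[OF F]) (use q in \<open>auto simp: jcurve_image_def\<close>)
    moreover have "(\<lambda>v. F v u) holomorphic_on S" if "u \<in> path_image (c q)" for u
      using hol that q by (auto simp: jcurve_image_def)
    ultimately show "contour_integral (\<gamma> i) (\<lambda>v. contour_integral (c q) (F v))
        = contour_integral (c q) (\<lambda>u. contour_integral (\<gamma> i) (\<lambda>v. F v u))"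
      and "(\<lambda>v. contour_integral (c q) (F v)) contour_integrable_on \<gamma> i"
      and "(\<lambda>u. contour_integral (\<gamma> i) (\<lambda>v. F v u)) contour_integrable_on c q"
      using contour_integral_swap_holomorphic[OF S, of "\<gamma> i" "c q" F] \<gamma>[OF i] c[OF q] by auto
  qed
  have "contour_integral (\<gamma> i) (\<lambda>v. jint P c (F v))
      = 1 / \<tau> * (\<Sum>q\<in>P. contour_integral (\<gamma> i) (\<lambda>v. contour_integral (c q) (F v)))"
    if "i \<in> I" for i
    unfolding jint_def \<tau>_def using that P int1
    by (subst contour_integral_lmul) (auto intro!: contour_integrable_sum simp: contour_integral_sum)
  moreover have "contour_integral (c q) (\<lambda>u. jint I \<gamma> (\<lambda>v. F v u))
      = 1 / \<tau> * (\<Sum>i\<in>I. contour_integral (c q) (\<lambda>u. contour_integral (\<gamma> i) (\<lambda>v. F v u)))"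
    if "q \<in> P" for q
    unfolding jint_def \<tau>_def using that I int2
    by (subst contour_integral_lmul) (auto intro!: contour_integrable_sum simp: contour_integral_sum)
  ultimately show ?thesis
    unfolding jint_def \<tau>_def[symmetric]
    by (simp add: sum_distrib_left swap sum.swap[of _ I])
qed

lemma jordan_curve_isolate_poles:
  assumes J: "jordan_curve I \<gamma>" and mero: "\<xi> meromorphic_on closure (jdomain I \<gamma>)"
    and an: "\<xi> analytic_on jcurve_image I \<gamma>"
  obtains W P r where "open W" "closure (jdomain I \<gamma>) \<subseteq> W" "finite P" "\<xi> holomorphic_on W - P"
    "\<And>q. q \<in> P \<Longrightarrow> 0 < r q \<and> cball q (r q) \<subseteq> jdomain I \<gamma> - jcurve_image I \<gamma> - (P - {q})"
proof -
  define D \<Gamma> where "D = jdomain I \<gamma>" and "\<Gamma> = jcurve_image I \<gamma>"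
  define P where "P = {z \<in> closure D. \<not> \<xi> analytic_on {z}}"
  obtain W where W: "open W" "closure D \<subseteq> W" "finite P" "\<xi> holomorphic_on W - P"
    unfolding P_def
    by (rule meromorphic_on_compact_finite_singularities[OF mero compact_closure_jdomain[OF J],
          folded D_def])
  have PD: "P \<subseteq> D - \<Gamma>"
  proof
    fix z assume z: "z \<in> P"
    then have "z \<notin> \<Gamma>" using analytic_on_subset[OF an] by (auto simp: P_def \<Gamma>_def)
    then show "z \<in> D - \<Gamma>"
      using z closure_jdomain[OF J] by (auto simp: P_def D_def \<Gamma>_def)
  qed
  have open_D\<Gamma>: "open (D - \<Gamma>)"
    unfolding D_def \<Gamma>_def
    by (rule open_Diff[OF open_jdomain[OF J] compact_imp_closed[OF compact_jcurve_image[OF J]]])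
  have "\<forall>q\<in>P. \<exists>e. 0 < e \<and> cball q e \<subseteq> D - \<Gamma> - (P - {q})"
  proof
    fix q assume q: "q \<in> P"
    obtain e where "0 < e" "\<forall>w\<in>cball q e. w \<in> D - \<Gamma> \<and> (w \<noteq> q \<longrightarrow> w \<notin> P)"
      using finite_cball_avoid[OF open_D\<Gamma> W(3)] PD q by blast
    then show "\<exists>e. 0 < e \<and> cball q e \<subseteq> D - \<Gamma> - (P - {q})" by blast
  qed
  then obtain r where "\<forall>q\<in>P. 0 < r q \<and> cball q (r q) \<subseteq> D - \<Gamma> - (P - {q})"
    by (rule bchoice[THEN exE])
  with W show ?thesis
    unfolding D_def \<Gamma>_def by (intro that[of W P r]) auto
qed

locale jordan_curve_finite_poles =
  fixes I :: "'i set" and \<gamma> :: "'i \<Rightarrow> real \<Rightarrow> complex" and U :: "complex set"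
    and P :: "complex set" and r :: "complex \<Rightarrow> real"
    and \<xi> :: "complex \<Rightarrow> complex" and f :: "complex \<Rightarrow> complex \<Rightarrow> complex"
  assumes jordan: "jordan_curve I \<gamma>"
    and U: "open U" "closure (jdomain I \<gamma>) \<subseteq> U"
    and P: "finite P"
    and r: "\<And>q. q \<in> P \<Longrightarrow> 0 < r q \<and> cball q (r q) \<subseteq> jdomain I \<gamma> - jcurve_image I \<gamma> - (P - {q})"
    and \<xi>: "\<xi> holomorphic_on U - P"
    and f_cont: "continuous_on (U \<times> U) (\<lambda>(u, v). f u v)"
    and f_hol1: "\<And>v. v \<in> U \<Longrightarrow> (\<lambda>u. f u v) holomorphic_on U"
    and f_hol2: "\<And>u. u \<in> U \<Longrightarrow> f u holomorphic_on U"
begin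

abbreviation circles :: "complex \<Rightarrow> real \<Rightarrow> complex" where
  "circles q \<equiv> circlepath q (r q)"

lemma domain_subset: "jdomain I \<gamma> \<subseteq> U"
  using U(2) closure_subset by blast

lemma curve_subset: "jcurve_image I \<gamma> \<subseteq> U"
  using U(2) closure_jdomain[OF jordan] by blast

lemma disc_subset: "q \<in> P \<Longrightarrow> 0 < r q \<and> cball q (r q) \<subseteq> U - (P - {q})"
  using r domain_subset by blast

lemma poles_subset: "P \<subseteq> jdomain I \<gamma> - jcurve_image I \<gamma>"
proof
  fix q assume q: "q \<in> P"
  then have "q \<in> cball q (r q)" using r by (simp add: less_imp_le)
  then show "q \<in> jdomain I \<gamma> - jcurve_image I \<gamma>" using r[OF q] by blast
qed

lemma circles_image: "jcurve_image P circles = (\<Union>q\<in>P. sphere q (r q))"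
  using r by (auto simp: jcurve_image_def path_image_circlepath_nonneg less_imp_le)

lemma circles_image_subset: "jcurve_image P circles \<subseteq> jdomain I \<gamma> - jcurve_image I \<gamma> - P"
proof -
  have "sphere q (r q) \<subseteq> cball q (r q) - {q}" if "q \<in> P" for q
    using r[OF that] by auto
  then show ?thesis unfolding circles_image using r by blast
qed

lemma continuous_on_circles_image: "continuous_on (jcurve_image P circles) \<xi>"
  using circles_image_subset domain_subset
  by (intro continuous_on_subset[OF holomorphic_on_imp_continuous_on[OF \<xi>]]) auto

lemma jint_dquot:
  assumes v: "v \<in> jcurve_image I \<gamma>"
  shows "jint I \<gamma> (\<lambda>u. f u v * dquot \<xi> u v) = jint P circles (\<lambda>u. f u v * \<xi> u / (u - v))"
proof -
  have "(\<lambda>u. dquot \<xi> u v) holomorphic_on U - P"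
    using pole_lemma_open[OF \<xi> open_Diff[OF U(1) finite_imp_closed[OF P]], of v]
    by (simp add: dquot_def[abs_def] if_distrib cong: if_cong)
  moreover have "(\<lambda>u. f u v) holomorphic_on U - P"
    using f_hol1 v curve_subset holomorphic_on_subset by blast
  ultimately have "(\<lambda>u. f u v * dquot \<xi> u v) holomorphic_on U - P"
    by (simp add: holomorphic_on_mult)
  then have "jint I \<gamma> (\<lambda>u. f u v * dquot \<xi> u v) = jint P circles (\<lambda>u. f u v * dquot \<xi> u v)"
    using jint_shrink_to_circlepaths[OF jordan U P poles_subset disc_subset] by blast
  also have "\<dots> = jint P circles (\<lambda>u. f u v * \<xi> u / (u - v))"
    unfolding jint_def
  proof (intro arg_cong[where f = "(*) _"] sum.cong refl contour_integral_circlepath_dquot)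
    fix q assume q: "q \<in> P"
    show "0 < r q" "v \<notin> cball q (r q)" using r[OF q] v by auto
    show "(\<lambda>u. f u v) holomorphic_on cball q (r q)"
      using f_hol1 v curve_subset disc_subset[OF q] holomorphic_on_subset by blast
    show "continuous_on (sphere q (r q)) \<xi>"
      using continuous_on_circles_image q circles_image continuous_on_subset by blast
  qed
  finally show ?thesis .
qed

lemma jint_Cauchy_kernel:
  assumes u: "u \<in> jcurve_image P circles"
  shows "jint I \<gamma> (\<lambda>v. f u v * \<xi> u / (u - v)) = - (f u u * \<xi> u)"
proof -
  have uD: "u \<in> jdomain I \<gamma> - jcurve_image I \<gamma>" using u circles_image_subset by blast
  have "jint I \<gamma> (\<lambda>v. f u v * \<xi> u / (u - v)) = jint I \<gamma> (\<lambda>v. - (\<xi> u * f u v / (v - u)))"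
  proof (rule jint_cong)
    fix v assume "v \<in> jcurve_image I \<gamma>"
    then have "u - v \<noteq> 0" "v - u \<noteq> 0" using uD by auto
    then show "f u v * \<xi> u / (u - v) = - (\<xi> u * f u v / (v - u))"
      by (simp add: field_simps)
  qed
  also have "\<dots> = - (\<xi> u * f u u)"
    using uD domain_subset f_hol2
    by (simp add: jint_uminus jint_Cauchy_integral_formula[OF jordan U] holomorphic_intros subset_iff)
  finally show ?thesis by (simp add: mult.commute)
qed

text \<open>Fubini is applied on the complement of the closed discs, an open set containing
  the Jordan curve on which the Cauchy kernel has no singularity.\<close>
lemma jint_swap_circles:
  "jint I \<gamma> (\<lambda>v. jint P circles (\<lambda>u. f u v * \<xi> u / (u - v)))
     = jint P circles (\<lambda>u. jint I \<gamma> (\<lambda>v. f u v * \<xi> u / (u - v)))"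
proof -
  define S where "S = U - (\<Union>q\<in>P. cball q (r q))"
  have SU: "S \<subseteq> U" by (auto simp: S_def)
  have K: "jcurve_image P circles \<subseteq> U" "S \<inter> jcurve_image P circles = {}"
    using circles_image_subset domain_subset by (auto simp: S_def circles_image)
  have S: "open S" unfolding S_def using U(1) P by (intro open_Diff closed_UN) auto
  have \<gamma>S: "valid_path (\<gamma> i) \<and> path_image (\<gamma> i) \<subseteq> S" if i: "i \<in> I" for i
  proof -
    have "path_image (\<gamma> i) \<subseteq> jcurve_image I \<gamma>" using i by (auto simp: jcurve_image_def)
    moreover have "jcurve_image I \<gamma> \<inter> cball q (r q) = {}" if "q \<in> P" for q
      using r[OF that] by blast
    ultimately show ?thesis
      using curve_subset jordan_curveD(1)[OF jordan i] by (auto simp: S_def)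
  qed
  have "continuous_on (S \<times> jcurve_image P circles) (\<lambda>x. f (snd x) (fst x) * \<xi> (snd x) / (snd x - fst x))"
  proof (intro continuous_on_divide continuous_on_mult ballI)
    have "S \<times> jcurve_image P circles \<subseteq> U \<times> U" using SU K(1) by auto
    then show "continuous_on (S \<times> jcurve_image P circles) (\<lambda>x. f (snd x) (fst x))"
      using continuous_on_subset[OF continuous_on_swap_args[OF f_cont]] by (simp add: split_beta)
    show "continuous_on (S \<times> jcurve_image P circles) (\<lambda>x. \<xi> (snd x))"
      by (rule continuous_on_compose2[OF continuous_on_circles_image continuous_on_snd]) auto
    show "continuous_on (S \<times> jcurve_image P circles) (\<lambda>x. snd x - fst x)"
      by (intro continuous_intros)
    show "snd x - fst x \<noteq> 0" if "x \<in> S \<times> jcurve_image P circles" for x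
      using that K(2) by auto
  qed
  then have cont: "continuous_on (S \<times> jcurve_image P circles) (\<lambda>(v, u). f u v * \<xi> u / (u - v))"
    by (simp add: split_beta)
  have hol: "(\<lambda>v. f u v * \<xi> u / (u - v)) holomorphic_on S" if u: "u \<in> jcurve_image P circles" for u
  proof -
    have "f u holomorphic_on S" using f_hol2 u K(1) SU holomorphic_on_subset by blast
    then show ?thesis using u K(2) by (intro holomorphic_intros) auto
  qed
  have "finite I" using jordan by (simp add: jordan_curve_def)
  from jint_swap_holomorphic[OF this P S \<gamma>S _ cont hol] show ?thesis
    by (simp add: continuous_on_vector_derivative_circlepath)
qed

theorem jint_jint_dquot:
  "jint I \<gamma> (\<lambda>v. jint I \<gamma> (\<lambda>u. f u v * dquot \<xi> u v)) = - jint I \<gamma> (\<lambda>u. f u u * \<xi> u)"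
proof -
  have "(\<lambda>u. f u u) holomorphic_on U - P"
    using holomorphic_on_diagonal[OF U(1) f_cont] f_hol1 f_hol2 holomorphic_on_subset[of _ U "U - P"]
    by blast
  then have diag: "(\<lambda>u. f u u * \<xi> u) holomorphic_on U - P"
    using \<xi> by (rule holomorphic_on_mult)
  have "jint I \<gamma> (\<lambda>v. jint I \<gamma> (\<lambda>u. f u v * dquot \<xi> u v))
      = jint I \<gamma> (\<lambda>v. jint P circles (\<lambda>u. f u v * \<xi> u / (u - v)))"
    by (rule jint_cong) (rule jint_dquot)
  also have "\<dots> = jint P circles (\<lambda>u. jint I \<gamma> (\<lambda>v. f u v * \<xi> u / (u - v)))"
    by (rule jint_swap_circles)
  also have "\<dots> = jint P circles (\<lambda>u. - (f u u * \<xi> u))"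
    by (rule jint_cong) (rule jint_Cauchy_kernel)
  also have "\<dots> = - jint I \<gamma> (\<lambda>u. f u u * \<xi> u)"
    by (simp add: jint_uminus jint_shrink_to_circlepaths[OF jordan U P poles_subset disc_subset diag])
  finally show ?thesis .
qed

end

theorem lemma5p8:
  fixes I :: "'i set" and \<gamma> :: "'i \<Rightarrow> real \<Rightarrow> complex"
    and \<xi> :: "complex \<Rightarrow> complex" and f :: "complex \<Rightarrow> complex \<Rightarrow> complex"
    and U :: "complex set"
  assumes "jordan_curve I \<gamma>"
    and "\<xi> meromorphic_on closure (jdomain I \<gamma>)"
    and "\<xi> analytic_on jcurve_image I \<gamma>"
    and "open U" and "closure (jdomain I \<gamma>) \<subseteq> U"
    and "continuous_on (U \<times> U) (\<lambda>(u, v). f u v)"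
    and "\<forall>v\<in>U. (\<lambda>u. f u v) holomorphic_on U"
    and "\<forall>u\<in>U. f u holomorphic_on U"
  shows "jint I \<gamma> (\<lambda>v. jint I \<gamma> (\<lambda>u. f u v * dquot \<xi> u v))
           = - jint I \<gamma> (\<lambda>u. f u u * \<xi> u)"
proof -
  obtain W P r where W: "open W" "closure (jdomain I \<gamma>) \<subseteq> W" "finite P" "\<xi> holomorphic_on W - P"
    and r: "\<And>q. q \<in> P \<Longrightarrow> 0 < r q \<and> cball q (r q) \<subseteq> jdomain I \<gamma> - jcurve_image I \<gamma> - (P - {q})"
    using jordan_curve_isolate_poles[OF assms(1-3)] by blast
  interpret jordan_curve_finite_poles I \<gamma> "W \<inter> U" P r \<xi> f
  proof
    show "open (W \<inter> U)" "closure (jdomain I \<gamma>) \<subseteq> W \<inter> U"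
      using W(1,2) assms(4,5) by auto
    show "\<xi> holomorphic_on W \<inter> U - P"
      by (rule holomorphic_on_subset[OF W(4)]) auto
    show "continuous_on ((W \<inter> U) \<times> (W \<inter> U)) (\<lambda>(u, v). f u v)"
      by (rule continuous_on_subset[OF assms(6)]) auto
    show "(\<lambda>u. f u v) holomorphic_on W \<inter> U" if "v \<in> W \<inter> U" for v
      by (rule holomorphic_on_subset[of _ U]) (use that assms(7) in auto)
    show "f u holomorphic_on W \<inter> U" if "u \<in> W \<inter> U" for u
      by (rule holomorphic_on_subset[of _ U]) (use that assms(8) in auto)
  qed (fact assms(1) W(3) r)+
  show ?thesis by (rule jint_jint_dquot)
qed

end
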